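(* Let $0<s\le 1$. If there exists a tight $(\rho(s),\chi)$-bidding profile, then $\chi\ge\chi(s)$, where \[ \rho(s):=\frac{e^s}{s},\qquad \chi(s):=\begin{cases}(e^s-1)/s, & 0<s\le\ln 2,\\ \xi(s)/s, & \ln2\le s\le 1,\end{cases} \] and $\xi(s)$ is the unique solution $\xi\in[1,e]$ of $\xi(2-\ln\xi)=e^s$.
   Context: Given $1<\chi\le\rho$, a $(\rho,\chi)$-bidding profile is a non-decreasing, left-continuous $G:\mathbb{R}\to(0,\infty)$ such that (offset) $G(x)<1$ for $x<0$ and $G(x)\ge1$ for $x>0$; (robustness) $\int_{-\infty}^{x+1}G(t)\,\mathrm{d} t\le\rho G(x)$ for all $x\in\mathbb{R}$; (consistency) $\int_{-\infty}^1G(t)\,\mathrm{d} t\le\chi$. It is tight if additionally $\int_{-\infty}^{x+1}G(t)\,\mathrm{d} t=\rho G(x)$ for all $x\le0$ and $\int_{-\infty}^1G(t)\,\mathrm{d} t=\chi$. *)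

theory Defs
  imports "HOL-Analysis.Analysis"
begin

text \<open>Integrals of the positive function G over half-lines are taken as
non-negative Lebesgue integrals in ennreal, so "the integral is finite and
bounded by ..." is expressed faithfully (an infinite integral violates the bound).\<close>

definition bidding_profile :: "real \<Rightarrow> real \<Rightarrow> (real \<Rightarrow> real) \<Rightarrow> bool" where
  "bidding_profile r c G \<longleftrightarrow>
     1 < c \<and> c \<le> r \<and>
     mono G \<and> (\<forall>x. 0 < G x) \<and> (\<forall>x. continuous (at_left x) G) \<and>
     (\<forall>x<0. G x < 1) \<and> (\<forall>x>0. G x \<ge> 1) \<and>
     (\<forall>x. (\<integral>\<^sup>+ t. ennreal (G t) * indicator {..x+1} t \<partial>lborel) \<le> ennreal (r * G x)) \<and>
     (\<integral>\<^sup>+ t. ennreal (G t) * indicator {..1} t \<partial>lborel) \<le> ennreal c"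

definition tight_bidding_profile :: "real \<Rightarrow> real \<Rightarrow> (real \<Rightarrow> real) \<Rightarrow> bool" where
  "tight_bidding_profile r c G \<longleftrightarrow>
     bidding_profile r c G \<and>
     (\<forall>x\<le>0. (\<integral>\<^sup>+ t. ennreal (G t) * indicator {..x+1} t \<partial>lborel) = ennreal (r * G x)) \<and>
     (\<integral>\<^sup>+ t. ennreal (G t) * indicator {..1} t \<partial>lborel) = ennreal c"

definition rho_s :: "real \<Rightarrow> real" where
  "rho_s s = exp s / s"

definition xi_s :: "real \<Rightarrow> real" where
  "xi_s s = (THE \<xi>. \<xi> \<in> {1..exp 1} \<and> \<xi> * (2 - ln \<xi>) = exp s)"

definition chi_s :: "real \<Rightarrow> real" where
  "chi_s s = (if s \<le> ln 2 then (exp s - 1) / s else xi_s s / s)"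

end

theory Submission
  imports Defs
begin

text \<open>
  Write F y for the integral of G over (-\<infinity>, y], so that robustness reads
  F (x + 1) \<le> exp s / s * G x. Robustness forces exponential growth,
  F b \<ge> exp (s (b - a)) F a for a \<le> b: if m is the best growth rate of F, then
  G \<ge> s exp (m - s) F, so by Gronwall F grows at rate s exp (m - s), which exceeds m
  unless m \<ge> s (this is where s \<le> 1 is used). Hence H y = exp (-s y) F y is
  nondecreasing. Tightness on (-\<infinity>, 0] makes L y = H y - s \<integral>[y, y + 1] H constant
  there, and letting y \<rightarrow> -\<infinity> gives L 0 \<ge> 0, i.e. s \<integral>[0, 1] H \<le> F 0. Integrating by
  parts, every continuous minorant m of G on (0, 1] then satisfies
  \<integral>[0, 1] exp (-s u) m u du \<le> exp (-s) F 1 = exp (-s) c. The minorants 1 (offset) and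
  max 1 (\<xi> exp (s (u - 1))) with \<xi> = s c (robustness and growth) give exp s - 1 \<le> s c
  and exp s \<le> \<xi> (2 - ln \<xi>); since \<xi> (2 - ln \<xi>) increases on [1, e], the latter
  means s c \<ge> xi_s s.
\<close>

lemma less_mult_exp_diff:
  fixes m s :: real
  assumes "0 < s" "s \<le> 1" "m < s"
  shows "m < s * exp (m - s)"
proof -
  have "1 + (m - s) < exp (m - s)"
    using exp_minus_greater[of "s - m"] assms(3) by simp
  then have "s * (1 + (m - s)) < s * exp (m - s)"
    using assms(1) by simp
  moreover have "s * (1 + (m - s)) - m = (s - m) * (1 - s)"
    by (simp add: algebra_simps)
  moreover have "0 \<le> (s - m) * (1 - s)"
    using assms by simp
  ultimately show ?thesis by linarith
qed

lemma strict_mono_on_mult_two_minus_ln: "strict_mono_on {1..exp 1} (\<lambda>x::real. x * (2 - ln x))"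
proof (rule strict_mono_onI)
  fix a b :: real assume ab: "a \<in> {1..exp 1}" "b \<in> {1..exp 1}" "a < b"
  show "a * (2 - ln a) < b * (2 - ln b)"
  proof (rule DERIV_pos_imp_increasing_open[OF \<open>a < b\<close>])
    fix x assume x: "a < x" "x < b"
    then have "ln x < ln (exp 1)"
      using ab by (subst ln_less_cancel_iff) auto
    then have "0 < 1 - ln x"
      by simp
    moreover have "((\<lambda>x. x * (2 - ln x)) has_real_derivative 1 - ln x) (at x)"
      using x ab by (auto intro!: derivative_eq_intros simp: algebra_simps)
    ultimately show "\<exists>y. ((\<lambda>x. x * (2 - ln x)) has_real_derivative y) (at x) \<and> 0 < y"
      by auto
  next
    show "continuous_on {a..b} (\<lambda>x. x * (2 - ln x))"
      using ab by (intro continuous_at_imp_continuous_on ballI continuous_intros isCont_ln) auto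
  qed
qed

lemma xi_s_solves:
  assumes "ln 2 \<le> s" "s \<le> 1"
  shows "xi_s s \<in> {1..exp 1}" and "xi_s s * (2 - ln (xi_s s)) = exp s"
proof -
  let ?\<phi> = "\<lambda>x::real. x * (2 - ln x)"
  have "2 \<le> exp s"
    using assms(1) by (metis exp_ln exp_le_cancel_iff zero_less_numeral)
  moreover have "exp s \<le> exp 1"
    using assms(2) by simp
  moreover have "continuous_on {1..exp 1} ?\<phi>"
    by (intro continuous_at_imp_continuous_on ballI continuous_intros isCont_ln) auto
  ultimately obtain x where x: "x \<in> {1..exp 1}" "?\<phi> x = exp s"
    using IVT'[of ?\<phi> 1 "exp s" "exp 1"] by auto
  have "xi_s s = x"
    unfolding xi_s_def
  proof (rule the_equality)
    fix y assume y: "y \<in> {1..exp 1} \<and> ?\<phi> y = exp s"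
    show "y = x"
      by (rule inj_onD[OF strict_mono_on_imp_inj_on[OF strict_mono_on_mult_two_minus_ln]])
        (use x y in auto)
  qed (use x in auto)
  with x show "xi_s s \<in> {1..exp 1}" "xi_s s * (2 - ln (xi_s s)) = exp s"
    by auto
qed

lemma has_integral_exp_neg:
  fixes a b s :: real
  assumes "s \<noteq> 0" "a \<le> b"
  shows "((\<lambda>u. exp (-s*u)) has_integral (exp (-s*a) - exp (-s*b)) / s) {a..b}"
proof -
  have "((\<lambda>u. exp (-s*u)) has_integral (- exp (-s*b) / s) - (- exp (-s*a) / s)) {a..b}"
  proof (rule fundamental_theorem_of_calculus[OF assms(2)])
    fix x assume "x \<in> {a..b}"
    have "((\<lambda>u. - exp (-s*u) / s) has_real_derivative exp (-s*x)) (at x within {a..b})"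
      using assms(1) by (auto intro!: derivative_eq_intros)
    then show "((\<lambda>u. - exp (-s*u) / s) has_vector_derivative exp (-s*x)) (at x within {a..b})"
      by (simp add: has_real_derivative_iff_has_vector_derivative)
  qed
  then show ?thesis
    by (simp add: diff_divide_distrib)
qed

lemma has_integral_exp_neg_max:
  fixes s \<xi> :: real
  assumes s: "0 < s" and \<xi>: "1 \<le> \<xi>" "\<xi> \<le> exp s"
  shows "((\<lambda>u. exp (-s*u) * max 1 (\<xi> * exp (s*(u-1)))) has_integral
    (1 - \<xi> * exp (-s) * (1 - ln \<xi>)) / s) {0..1}"
proof -
  define \<theta> where "\<theta> = 1 - ln \<xi> / s"
  have ln\<xi>: "0 \<le> ln \<xi>" "ln \<xi> \<le> s"
    using \<xi> ln_le_cancel_iff[of \<xi> "exp s"] by auto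
  then have \<theta>: "0 \<le> \<theta>" "\<theta> \<le> 1"
    using s by (auto simp: \<theta>_def field_simps)
  have exp_eq: "\<xi> * exp (s*(u-1)) = exp (ln \<xi> + s*(u-1))" for u
    using \<xi> by (simp add: exp_add)
  have left_part: "exp (-s*u) * max 1 (\<xi> * exp (s*(u-1))) = exp (-s*u)" if "u \<le> \<theta>" for u
  proof -
    have "\<xi> * exp (s*(u-1)) \<le> 1"
      unfolding exp_eq using s that by (simp add: \<theta>_def field_simps)
    then show ?thesis
      by (simp add: max_absorb1)
  qed
  have right_part: "exp (-s*u) * max 1 (\<xi> * exp (s*(u-1))) = \<xi> * exp (-s)" if "\<theta> \<le> u" for u
  proof -
    have "1 \<le> \<xi> * exp (s*(u-1))"
      unfolding exp_eq using s that by (simp add: \<theta>_def field_simps)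
    moreover have "-s*u + s*(u-1) = -s"
      by (simp add: algebra_simps)
    ultimately show ?thesis
      by (metis max_absorb2 exp_add mult.left_commute)
  qed
  have "((\<lambda>u. exp (-s*u)) has_integral (1 - exp (-s*\<theta>)) / s) {0..\<theta>}"
    using has_integral_exp_neg[of s 0 \<theta>] s \<theta> by simp
  then have "((\<lambda>u. exp (-s*u) * max 1 (\<xi> * exp (s*(u-1)))) has_integral (1 - exp (-s*\<theta>)) / s) {0..\<theta>}"
    by (rule has_integral_eq[rotated]) (rule left_part[symmetric], simp)
  moreover have "((\<lambda>_. \<xi> * exp (-s)) has_integral (1 - \<theta>) * (\<xi> * exp (-s))) {\<theta>..1}"
    using has_integral_const_real[of "\<xi> * exp (-s)" \<theta> 1] \<theta> by simp
  then have "((\<lambda>u. exp (-s*u) * max 1 (\<xi> * exp (s*(u-1)))) has_integral (1 - \<theta>) * (\<xi> * exp (-s))) {\<theta>..1}"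
    by (rule has_integral_eq[rotated]) (rule right_part[symmetric], simp)
  ultimately have "((\<lambda>u. exp (-s*u) * max 1 (\<xi> * exp (s*(u-1)))) has_integral
      (1 - exp (-s*\<theta>)) / s + (1 - \<theta>) * (\<xi> * exp (-s))) {0..1}"
    using \<theta> by (intro has_integral_combine) auto
  moreover have "exp (-s*\<theta>) = \<xi> * exp (-s)"
  proof -
    have "-s*\<theta> = ln \<xi> + (-s)"
      using s by (simp add: \<theta>_def field_simps)
    then have "exp (-s*\<theta>) = exp (ln \<xi>) * exp (-s)"
      by (simp only: exp_add)
    then show ?thesis
      using \<xi> by simp
  qed
  ultimately show ?thesis
    using s by (simp add: \<theta>_def field_simps)
qed

lemma integral_exp_weighted_by_parts:
  fixes a b s :: real and m :: "real \<Rightarrow> real"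
  assumes m: "continuous_on {a..b} m" and "a \<le> b"
  shows "integral {a..b} (\<lambda>u. exp (-s*u) * m u)
    = exp (-s*b) * integral {a..b} m + s * integral {a..b} (\<lambda>u. exp (-s*u) * integral {a..u} m)"
proof -
  define M where "M u = integral {a..u} m" for u
  have M_cont: "continuous_on {a..b} M"
    unfolding M_def by (intro indefinite_integral_continuous_1 integrable_continuous_interval m)
  have "((\<lambda>u. exp (-s*u) * m u - s * (exp (-s*u) * M u)) has_integral
      exp (-s*b) * M b - exp (-s*a) * M a) {a..b}"
  proof (rule fundamental_theorem_of_calculus[OF \<open>a \<le> b\<close>])
    fix x assume x: "x \<in> {a..b}"
    have "(M has_real_derivative m x) (at x within {a..b})"
      unfolding M_def[abs_def] by (rule integral_has_real_derivative[OF m x])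
    then have "((\<lambda>u. exp (-s*u) * M u) has_real_derivative
        exp (-s*x) * m x - s * (exp (-s*x) * M x)) (at x within {a..b})"
      by (auto intro!: derivative_eq_intros simp: algebra_simps)
    then show "((\<lambda>u. exp (-s*u) * M u) has_vector_derivative
        exp (-s*x) * m x - s * (exp (-s*x) * M x)) (at x within {a..b})"
      by (simp add: has_real_derivative_iff_has_vector_derivative)
  qed
  moreover have "M a = 0"
    unfolding M_def by simp
  moreover have "integral {a..b} (\<lambda>u. exp (-s*u) * m u - s * (exp (-s*u) * M u))
      = integral {a..b} (\<lambda>u. exp (-s*u) * m u) - s * integral {a..b} (\<lambda>u. exp (-s*u) * M u)"
    by (subst integral_diff) (auto intro!: integrable_continuous_interval continuous_intros m M_cont)
  ultimately show ?thesis
    unfolding M_def by (simp add: integral_unique)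
qed

lemma integral_has_real_derivative_interior:
  fixes f :: "real \<Rightarrow> real"
  assumes "continuous_on {a..b} f" "a < x" "x < b"
  shows "((\<lambda>y. integral {a..y} f) has_real_derivative f x) (at x)"
proof -
  have "((\<lambda>y. integral {a..y} f) has_real_derivative f x) (at x within {a..b})"
    using assms by (intro integral_has_real_derivative) auto
  moreover have "at x within {a..b} = at x"
    using assms by (intro at_within_interior) (auto simp: interior_atLeastAtMost_real)
  ultimately show ?thesis
    by simp
qed

lemma has_real_derivative_integral_window:
  fixes f :: "real \<Rightarrow> real"
  assumes f: "continuous_on UNIV f" and "0 \<le> d"
  shows "((\<lambda>y. integral {y..y+d} f) has_real_derivative f (y + d) - f y) (at y)"
proof -
  define a where "a = y - 1"
  define P where "P z = integral {a..z} f" for z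
  have P_deriv: "(P has_real_derivative f z) (at z)" if "a < z" for z
    unfolding P_def[abs_def] using that
    by (intro integral_has_real_derivative_interior[where b="z + 1"] continuous_on_subset[OF f]) auto
  have "((\<lambda>y. P (y + d)) has_real_derivative f (y + d)) (at y)"
    using DERIV_shift[of P "f (y + d)" y d] P_deriv[of "y + d"] \<open>0 \<le> d\<close>
    by (simp add: a_def)
  then have "((\<lambda>y. P (y + d) - P y) has_real_derivative f (y + d) - f y) (at y)"
    by (rule DERIV_diff) (rule P_deriv, simp add: a_def)
  then show ?thesis
  proof (rule has_field_derivative_transform_within_open[where S="{a<..}"])
    fix z assume "z \<in> {a<..}"
    then have "integral {a..z} f + integral {z..z+d} f = integral {a..z+d} f"
      using \<open>0 \<le> d\<close>
      by (intro Henstock_Kurzweil_Integration.integral_combine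
          integrable_continuous_interval continuous_on_subset[OF f]) auto
    then show "P (z + d) - P z = integral {z..z+d} f"
      unfolding P_def by simp
  qed (auto simp: a_def)
qed

lemma nn_integral_finite_imp_has_integral:
  fixes f :: "real \<Rightarrow> real"
  assumes f: "f \<in> borel_measurable borel" "\<And>x. 0 \<le> f x" and A: "A \<in> sets borel"
    and finite: "(\<integral>\<^sup>+ t. ennreal (f t) * indicator A t \<partial>lborel) < \<infinity>"
  shows "(f has_integral enn2real (\<integral>\<^sup>+ t. ennreal (f t) * indicator A t \<partial>lborel)) A"
proof -
  let ?N = "\<integral>\<^sup>+ t. ennreal (f t) * indicator A t \<partial>lborel"
  have "(\<integral>\<^sup>+ t. ennreal (indicator A t * f t) \<partial>lborel) = ennreal (enn2real ?N)"
    using finite by (auto intro!: nn_integral_cong simp: indicator_def)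
  then have "((\<lambda>t. indicator A t * f t) has_integral enn2real ?N) UNIV"
    using f A by (intro nn_integral_has_integral) auto
  then show ?thesis
    by (simp add: indicator_times_eq_if(1) has_integral_restrict_UNIV)
qed

locale profile =
  fixes G :: "real \<Rightarrow> real"
  assumes G_mono: "mono G"
    and G_pos: "0 < G x"
    and G_integrable_halfline: "G integrable_on {..y}"
begin

definition F :: "real \<Rightarrow> real" where
  "F y = integral {..y} G"

lemma G_integrable: "G integrable_on {a..b}"
  by (rule integrable_on_subinterval[OF G_integrable_halfline[of b]]) auto

lemma F_split:
  assumes "a \<le> b"
  shows "F b = F a + integral {a..b} G"
proof -
  have "(G has_integral (F a + integral {a..b} G)) ({..a} \<union> {a..b})"
    unfolding F_def
  proof (rule has_integral_Un)
    have "{..a} \<inter> {a..b} = {a}"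
      using assms by auto
    then show "negligible ({..a} \<inter> {a..b})"
      by simp
  qed (use G_integrable_halfline G_integrable in auto)
  moreover have "{..a} \<union> {a..b} = {..b}"
    using assms by auto
  ultimately show ?thesis
    unfolding F_def[of b] by (metis integral_unique)
qed

lemma integral_G_ge:
  assumes "a \<le> b"
  shows "(b - a) * G a \<le> integral {a..b} G"
proof -
  have "integral {a..b} (\<lambda>_. G a) \<le> integral {a..b} G"
    by (rule integral_le) (use G_integrable G_mono in \<open>auto simp: mono_def\<close>)
  then show ?thesis
    using assms by simp
qed

lemma F_nonneg: "0 \<le> F y"
  unfolding F_def by (rule integral_nonneg) (use G_integrable_halfline G_pos less_imp_le in auto)

lemma F_pos: "0 < F y"
  using F_split[of "y - 1" y] integral_G_ge[of "y - 1" y] F_nonneg[of "y - 1"] G_pos[of "y - 1"]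
  by simp

lemma F_mono:
  assumes "a \<le> b"
  shows "F a \<le> F b"
  using F_split[OF assms] integral_G_ge[OF assms] G_pos[of a] assms
  by (smt (verit) mult_nonneg_nonneg)

lemma integral_le_F_diff:
  assumes "a \<le> b" and m: "m integrable_on {a..b}" and m_le: "\<And>u. a < u \<Longrightarrow> u \<le> b \<Longrightarrow> m u \<le> G u"
  shows "integral {a..b} m \<le> F b - F a"
proof -
  define G' where "G' u = (if u = a then m a else G u)" for u
  have "integral {a..b} m \<le> integral {a..b} G'"
  proof (rule integral_le[OF m])
    show "G' integrable_on {a..b}"
      by (rule integrable_spike[where S="{a}" and f=G]) (auto simp: G'_def intro: G_integrable)
  qed (use m_le in \<open>auto simp: G'_def\<close>)
  also have "integral {a..b} G' = integral {a..b} G"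
    by (rule integral_spike[where S="{a}"]) (auto simp: G'_def)
  finally show ?thesis
    using F_split[OF \<open>a \<le> b\<close>] by simp
qed

lemma F_continuous: "continuous_on S F"
proof -
  have "continuous_on {a..b} F" for a b
  proof -
    have "continuous_on {a..b} (\<lambda>x. F a + integral {a..x} G)"
      by (intro continuous_intros indefinite_integral_continuous_1 G_integrable)
    then show ?thesis
      by (rule continuous_on_eq) (use F_split in auto)
  qed
  then have "isCont F x" for x
    using continuous_on_interior[of "{x-1..x+1}" F x] by (simp add: interior_atLeastAtMost_real)
  then show ?thesis
    by (simp add: continuous_at_imp_continuous_on)
qed

lemma F_integrable: "F integrable_on {a..b}"
  by (rule integrable_continuous_interval) (rule F_continuous)

lemma F_has_real_derivative:
  assumes "isCont G y"
  shows "(F has_real_derivative G y) (at y)"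
proof -
  define a where "a = y - 1"
  have "((\<lambda>z. integral {a..z} G) has_vector_derivative G y) (at y within {a..y+1} - {})"
    using assms
    by (intro integral_has_vector_derivative_continuous_at G_integrable)
       (auto simp: a_def continuous_at_imp_continuous_within)
  moreover have "at y within {a..y+1} = at y"
    by (intro at_within_interior) (auto simp: a_def interior_atLeastAtMost_real)
  ultimately have "((\<lambda>z. F a + integral {a..z} G) has_real_derivative G y) (at y)"
    by (auto intro!: derivative_eq_intros simp: has_real_derivative_iff_has_vector_derivative)
  then show ?thesis
  proof (rule has_field_derivative_transform_within_open[where S="{a<..}"])
    show "F a + integral {a..z} G = F z" if "z \<in> {a<..}" for z
      using F_split[of a z] that by simp
  qed (auto simp: a_def)
qed

definition grows_at :: "real \<Rightarrow> bool" where
  "grows_at r \<longleftrightarrow> (\<forall>a b. a \<le> b \<longrightarrow> exp (r * (b - a)) * F a \<le> F b)"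

lemma grows_at_iff:
  "grows_at r \<longleftrightarrow> (\<forall>a b. a < b \<longrightarrow> r \<le> ln (F b / F a) / (b - a))"
proof -
  have rate: "exp (r * (b - a)) * F a \<le> F b \<longleftrightarrow> r \<le> ln (F b / F a) / (b - a)" if "a < b" for a b
  proof -
    have "exp (r * (b - a)) * F a \<le> F b \<longleftrightarrow> exp (r * (b - a)) \<le> F b / F a"
      using F_pos[of a] by (simp add: pos_le_divide_eq)
    also have "\<dots> \<longleftrightarrow> r * (b - a) \<le> ln (F b / F a)"
      using F_pos[of a] F_pos[of b] by (simp add: ln_ge_iff)
    also have "\<dots> \<longleftrightarrow> r \<le> ln (F b / F a) / (b - a)"
      using that by (simp add: pos_le_divide_eq)
    finally show ?thesis .
  qed
  show ?thesis
    unfolding grows_at_def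
  proof (intro iffI allI impI)
    fix a b :: real
    assume "\<forall>a b. a \<le> b \<longrightarrow> exp (r * (b - a)) * F a \<le> F b" "a < b"
    then show "r \<le> ln (F b / F a) / (b - a)"
      using rate[of a b] by simp
  next
    fix a b :: real
    assume rates: "\<forall>a b. a < b \<longrightarrow> r \<le> ln (F b / F a) / (b - a)" and "a \<le> b"
    show "exp (r * (b - a)) * F a \<le> F b"
    proof (cases "a = b")
      case False
      with rates \<open>a \<le> b\<close> show ?thesis
        using rate[of a b] by simp
    qed simp
  qed
qed

lemma grows_at_0: "grows_at 0"
  unfolding grows_at_def using F_mono by simp

lemma grows_at_smaller:
  assumes "grows_at m" "r \<le> m"
  shows "grows_at r"
  unfolding grows_at_def
proof (intro allI impI)
  fix a b :: real assume "a \<le> b"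
  then have "exp (r * (b - a)) * F a \<le> exp (m * (b - a)) * F a"
    using assms(2) F_nonneg[of a] by (intro mult_right_mono) (auto simp: mult_right_mono)
  also have "\<dots> \<le> F b"
    using assms(1) \<open>a \<le> b\<close> unfolding grows_at_def by blast
  finally show "exp (r * (b - a)) * F a \<le> F b" .
qed

lemma max_growth_rate: "\<exists>m. grows_at m \<and> (\<forall>r. grows_at r \<longrightarrow> r \<le> m)"
proof -
  define Q where "Q = {ln (F b / F a) / (b - a) | a b. a < b}"
  have Q_ne: "Q \<noteq> {}"
    unfolding Q_def by (auto intro: exI[of _ 0] exI[of _ 1])
  have "bdd_below Q"
    using grows_at_0 unfolding grows_at_iff Q_def by (intro bdd_belowI[where m=0]) blast
  then have "grows_at (Inf Q)"
    unfolding grows_at_iff by (auto intro: cInf_lower simp: Q_def)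
  moreover have "r \<le> Inf Q" if "grows_at r" for r
    using that Q_ne unfolding grows_at_iff by (intro cInf_greatest) (auto simp: Q_def)
  ultimately show ?thesis
    by blast
qed

lemma grows_at_if_G_ge:
  assumes "0 \<le> r" and G_ge: "\<And>v. r * F v \<le> G v"
  shows "grows_at r"
  unfolding grows_at_def
proof (intro allI impI)
  fix a b :: real assume "a \<le> b"
  define U where "U y = F a + r * integral {a..y} F" for y
  have U_le_F: "U y \<le> F y" if "a \<le> y" for y
  proof -
    have "integral {a..y} (\<lambda>v. r * F v) \<le> integral {a..y} G"
      by (rule integral_le) (use F_integrable G_integrable G_ge in \<open>auto intro: integrable_on_mult_right\<close>)
    then show ?thesis
      using F_split[OF that] unfolding U_def by simp
  qed
  define Z where "Z y = exp (-r*y) * U y" for y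
  have "Z a \<le> Z b"
  proof (rule DERIV_nonneg_imp_increasing_open[OF \<open>a \<le> b\<close>])
    fix x assume x: "a < x" "x < b"
    have "((\<lambda>y. integral {a..y} F) has_real_derivative F x) (at x)"
      using x by (intro integral_has_real_derivative_interior F_continuous)
    then have "(Z has_real_derivative r * exp (-r*x) * (F x - U x)) (at x)"
      unfolding Z_def U_def by (auto intro!: derivative_eq_intros simp: algebra_simps)
    moreover have "0 \<le> r * exp (-r*x) * (F x - U x)"
      using U_le_F[of x] x \<open>0 \<le> r\<close> by simp
    ultimately show "\<exists>y. (Z has_real_derivative y) (at x) \<and> 0 \<le> y"
      by blast
  qed (auto simp: Z_def U_def intro!: continuous_intros indefinite_integral_continuous_1 F_integrable)
  also have "Z b \<le> exp (-r*b) * F b"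
    unfolding Z_def using U_le_F[OF \<open>a \<le> b\<close>] by simp
  finally have "exp (-r*a) * F a \<le> exp (-r*b) * F b"
    by (simp add: Z_def U_def)
  then have "exp (r*b) * (exp (-r*a) * F a) \<le> exp (r*b) * (exp (-r*b) * F b)"
    by simp
  then show "exp (r * (b - a)) * F a \<le> F b"
    by (simp add: mult.assoc[symmetric] right_diff_distrib flip: exp_add)
qed

end

locale robust_profile = profile +
  fixes s :: real
  assumes s_pos: "0 < s" and s_le_1: "s \<le> 1"
    and robust: "F (x + 1) \<le> exp s / s * G x"
begin

lemma G_ge_F_succ: "s * exp (-s) * F (x + 1) \<le> G x"
proof -
  have "s * exp (-s) * F (x + 1) \<le> s * exp (-s) * (exp s / s * G x)"
    using robust s_pos by (intro mult_left_mono) auto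
  also have "\<dots> = G x"
    using s_pos by (simp add: exp_minus field_simps)
  finally show ?thesis .
qed

lemma G_ge_if_grows_at:
  assumes "grows_at m"
  shows "s * exp (m - s) * F x \<le> G x"
proof -
  have "exp m * F x \<le> F (x + 1)"
    using assms[unfolded grows_at_def, rule_format, of x "x + 1"] by simp
  then have "s * exp (-s) * (exp m * F x) \<le> s * exp (-s) * F (x + 1)"
    using s_pos by (intro mult_left_mono) auto
  then show ?thesis
    using G_ge_F_succ[of x] by (simp add: exp_diff exp_minus field_simps)
qed

lemma grows_at_s: "grows_at s"
proof -
  obtain m where m: "grows_at m" and m_max: "\<And>r. grows_at r \<Longrightarrow> r \<le> m"
    using max_growth_rate by blast
  have "s \<le> m"
  proof (rule ccontr)
    assume "\<not> s \<le> m"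
    have "0 \<le> m"
      using m_max[OF grows_at_0] .
    then have "grows_at (s * exp (m - s))"
      using s_pos G_ge_if_grows_at[OF m] by (intro grows_at_if_G_ge) auto
    then have "s * exp (m - s) \<le> m"
      by (rule m_max)
    moreover have "m < s * exp (m - s)"
      using \<open>\<not> s \<le> m\<close> s_pos s_le_1 by (intro less_mult_exp_diff) auto
    ultimately show False
      by simp
  qed
  then show ?thesis
    by (rule grows_at_smaller[OF m])
qed

lemma G_ge_F:
  assumes "a \<le> x + 1"
  shows "s * exp (s * (x - a)) * F a \<le> G x"
proof -
  have "exp (s * (x + 1 - a)) * F a \<le> F (x + 1)"
    using grows_at_s assms unfolding grows_at_def by simp
  then have "s * exp (-s) * (exp (s * (x + 1 - a)) * F a) \<le> s * exp (-s) * F (x + 1)"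
    using s_pos by (intro mult_left_mono) auto
  moreover have "exp (-s) * exp (s * (x + 1 - a)) = exp (s * (x - a))"
    by (simp add: algebra_simps flip: exp_add)
  then have "s * exp (s * (x - a)) * F a = s * exp (-s) * (exp (s * (x + 1 - a)) * F a)"
    by (simp only: mult.assoc flip: \<open>exp (-s) * _ = _\<close>)
  ultimately show ?thesis
    using G_ge_F_succ[of x] by linarith
qed

definition H :: "real \<Rightarrow> real" where
  "H y = exp (-s*y) * F y"

lemma H_mono:
  assumes "a \<le> b"
  shows "H a \<le> H b"
proof -
  have "exp (-s*b) * (exp (s * (b - a)) * F a) \<le> exp (-s*b) * F b"
    using grows_at_s assms unfolding grows_at_def by simp
  moreover have "exp (-s*b) * exp (s * (b - a)) = exp (-s*a)"
    by (simp add: algebra_simps flip: exp_add)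
  ultimately show ?thesis
    unfolding H_def by (metis mult.assoc)
qed

lemma H_nonneg: "0 \<le> H y"
  unfolding H_def using F_nonneg by simp

lemma H_continuous: "continuous_on S H"
  unfolding H_def by (intro continuous_intros F_continuous)

end

locale tight_profile = robust_profile +
  assumes tight: "x \<le> 0 \<Longrightarrow> F (x + 1) = exp s / s * G x"
begin

lemma G_eq_F_succ:
  assumes "x \<le> 0"
  shows "G x = s * exp (-s) * F (x + 1)"
  using tight[OF assms] s_pos by (simp add: exp_minus field_simps)

lemma H_has_real_derivative:
  assumes "y < 0"
  shows "(H has_real_derivative s * (H (y + 1) - H y)) (at y)"
proof -
  have "continuous_on {..0} G"
    by (rule continuous_on_eq[where f="\<lambda>x. s * exp (-s) * F (x + 1)"])
      (auto intro!: continuous_intros continuous_on_compose2[OF F_continuous] simp: G_eq_F_succ)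
  then have "isCont G y"
    using assms by (intro continuous_on_interior) auto
  then have "(H has_real_derivative -s * exp (-s*y) * F y + exp (-s*y) * G y) (at y)"
    unfolding H_def[abs_def] by (auto intro!: derivative_eq_intros F_has_real_derivative)
  moreover have "exp (-s*y) * G y = s * H (y + 1)"
    using assms unfolding G_eq_F_succ[OF less_imp_le[OF assms]] H_def
    by (simp add: algebra_simps flip: exp_add)
  ultimately show ?thesis
    by (simp add: H_def algebra_simps)
qed

definition L :: "real \<Rightarrow> real" where
  "L y = H y - s * integral {y..y+1} H"

lemma L_eq_L0:
  assumes "x < 0"
  shows "L x = L 0"
proof -
  have window: "((\<lambda>y. integral {y..y+1} H) has_real_derivative H (y + 1) - H y) (at y)" for y
    using has_real_derivative_integral_window[OF H_continuous, of 1] by simp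
  have "continuous_on {x..0} L"
    unfolding L_def
    by (intro continuous_intros H_continuous continuous_at_imp_continuous_on ballI
        DERIV_isCont[OF window])
  moreover have "(L has_real_derivative 0) (at y)" if "x < y" "y < 0" for y
    using DERIV_diff[OF H_has_real_derivative DERIV_cmult[OF window, of s]] that
    unfolding L_def[abs_def] by simp
  ultimately show ?thesis
    using DERIV_isconst2[of x 0 L 0] assms by simp
qed

lemma L_ge: "H x - s * H (x + 1) \<le> L x"
proof -
  have "integral {x..x+1} H \<le> integral {x..x+1} (\<lambda>_. H (x + 1))"
    by (rule integral_le) (auto intro: integrable_continuous_interval H_continuous H_mono)
  then show ?thesis
    unfolding L_def using s_pos by simp
qed

lemma L0_nonneg: "0 \<le> L 0"
proof (rule field_le_epsilon)
  fix e :: real assume "0 < e"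
  define \<Lambda> where "\<Lambda> = Inf (H ` {..0})"
  have bdd: "bdd_below (H ` {..0})"
    using H_nonneg by (intro bdd_belowI2)
  have "\<Lambda> < \<Lambda> + e"
    using \<open>0 < e\<close> by simp
  then obtain y where y: "y \<le> 0" "H y < \<Lambda> + e"
    using cInf_less_iff[of "H ` {..0}" "\<Lambda> + e"] bdd unfolding \<Lambda>_def by auto
  have "\<Lambda> \<le> H (y - 1)"
    unfolding \<Lambda>_def by (rule cInf_lower[OF _ bdd]) (use y in auto)
  moreover have "0 \<le> \<Lambda>"
    unfolding \<Lambda>_def using H_nonneg by (intro cInf_greatest) auto
  then have "s * H y \<le> \<Lambda> + e"
    using y s_pos s_le_1 H_nonneg[of y] \<open>0 < e\<close>
    by (smt (verit) mult_left_le_one_le)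
  moreover have "H (y - 1) - s * H y \<le> L 0"
    using L_ge[of "y - 1"] L_eq_L0[of "y - 1"] y by simp
  ultimately show "0 \<le> L 0 + e"
    by linarith
qed

lemma integral_H_le: "s * integral {0..1} H \<le> F 0"
  using L0_nonneg unfolding L_def H_def by simp

lemma integral_exp_weighted_increment_le:
  "s * integral {0..1} (\<lambda>u. exp (-s*u) * (F u - F 0)) \<le> exp (-s) * F 0"
proof -
  have "((\<lambda>u. H u - F 0 * exp (-s*u)) has_integral
      integral {0..1} H - F 0 * ((1 - exp (-s)) / s)) {0..1}"
    using has_integral_exp_neg[of s 0 1] s_pos
    by (intro has_integral_diff has_integral_mult_right integrable_integral
        integrable_continuous_interval H_continuous) auto
  moreover have "(\<lambda>u. H u - F 0 * exp (-s*u)) = (\<lambda>u. exp (-s*u) * (F u - F 0))"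
    by (auto simp: H_def algebra_simps)
  ultimately have "((\<lambda>u. exp (-s*u) * (F u - F 0)) has_integral
      integral {0..1} H - F 0 * ((1 - exp (-s)) / s)) {0..1}"
    by simp
  then have "s * integral {0..1} (\<lambda>u. exp (-s*u) * (F u - F 0))
      = s * integral {0..1} H - F 0 + exp (-s) * F 0"
    using s_pos by (simp add: integral_unique field_simps)
  then show ?thesis
    using integral_H_le by simp
qed

lemma integral_exp_weighted_le:
  assumes m: "continuous_on {0..1} m" and m_le_G: "\<And>u. 0 < u \<Longrightarrow> u \<le> 1 \<Longrightarrow> m u \<le> G u"
  shows "integral {0..1} (\<lambda>u. exp (-s*u) * m u) \<le> exp (-s) * F 1"
proof -
  define M where "M u = integral {0..u} m" for u
  have M_continuous: "continuous_on {0..1} M"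
    unfolding M_def by (intro indefinite_integral_continuous_1 integrable_continuous_interval m)
  have M_le: "M u \<le> F u - F 0" if "0 \<le> u" "u \<le> 1" for u
    using integral_le_F_diff[of 0 u m] m_le_G that
    unfolding M_def by (force intro: integrable_continuous_interval continuous_on_subset[OF m])
  have "integral {0..1} (\<lambda>u. exp (-s*u) * M u) \<le> integral {0..1} (\<lambda>u. exp (-s*u) * (F u - F 0))"
    by (rule integral_le) (auto intro!: M_le mult_left_mono integrable_continuous_interval
        continuous_intros F_continuous M_continuous)
  then have "s * integral {0..1} (\<lambda>u. exp (-s*u) * M u) \<le> exp (-s) * F 0"
    using integral_exp_weighted_increment_le s_pos by (smt (verit) mult_left_mono)
  moreover have "integral {0..1} (\<lambda>u. exp (-s*u) * m u)
      = exp (-s) * M 1 + s * integral {0..1} (\<lambda>u. exp (-s*u) * M u)"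
    using integral_exp_weighted_by_parts[OF m] unfolding M_def by simp
  moreover have "exp (-s) * M 1 \<le> exp (-s) * (F 1 - F 0)"
    using M_le[of 1] by simp
  ultimately show ?thesis
    by (simp add: algebra_simps)
qed

lemma exp_minus_one_le_s_F1:
  assumes offset: "\<And>u. 0 < u \<Longrightarrow> 1 \<le> G u"
  shows "exp s - 1 \<le> s * F 1"
proof -
  have "integral {0..1} (\<lambda>u. exp (-s*u) * 1) \<le> exp (-s) * F 1"
    using offset by (intro integral_exp_weighted_le) auto
  then have "(1 - exp (-s)) / s \<le> exp (-s) * F 1"
    using integral_unique[OF has_integral_exp_neg[of s 0 1]] s_pos by simp
  then have "1 - exp (-s) \<le> exp (-s) * (s * F 1)"
    using s_pos by (simp add: field_simps)
  then have "exp s * (1 - exp (-s)) \<le> exp s * (exp (-s) * (s * F 1))"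
    by simp
  then show ?thesis
    by (simp add: right_diff_distrib exp_minus_inverse flip: mult.assoc)
qed

lemma exp_le_xi_equation_s_F1:
  assumes offset: "\<And>u. 0 < u \<Longrightarrow> 1 \<le> G u" and "1 \<le> s * F 1" "s * F 1 \<le> exp s"
  shows "exp s \<le> s * F 1 * (2 - ln (s * F 1))"
proof -
  define \<xi> where "\<xi> = s * F 1"
  have "\<xi> * exp (s*(u-1)) \<le> G u" if "0 < u" for u
    using G_ge_F[of 1 u] that unfolding \<xi>_def by (simp add: ac_simps)
  then have "integral {0..1} (\<lambda>u. exp (-s*u) * max 1 (\<xi> * exp (s*(u-1)))) \<le> exp (-s) * F 1"
    using offset by (intro integral_exp_weighted_le continuous_intros) auto
  moreover have "((\<lambda>u. exp (-s*u) * max 1 (\<xi> * exp (s*(u-1)))) has_integral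
      (1 - \<xi> * exp (-s) * (1 - ln \<xi>)) / s) {0..1}"
    using s_pos assms(2,3) unfolding \<xi>_def by (intro has_integral_exp_neg_max) auto
  ultimately have "(1 - \<xi> * exp (-s) * (1 - ln \<xi>)) / s \<le> exp (-s) * F 1"
    by (simp add: integral_unique)
  then have "1 - \<xi> * exp (-s) * (1 - ln \<xi>) \<le> \<xi> * exp (-s)"
    using s_pos unfolding \<xi>_def by (simp add: field_simps)
  then have "exp s * 1 \<le> exp s * (exp (-s) * (\<xi> * (2 - ln \<xi>)))"
    by (intro mult_left_mono) (auto simp: algebra_simps)
  then show ?thesis
    unfolding \<xi>_def by (simp add: exp_minus_inverse flip: mult.assoc)
qed

end

lemma tight_profile_if_tight_bidding_profile:
  fixes s c :: real and G :: "real \<Rightarrow> real"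
  assumes "0 < s" and "s \<le> 1" and "tight_bidding_profile (rho_s s) c G"
  shows "tight_profile G s" and "profile.F G 1 = c"
proof -
  let ?N = "\<lambda>y. \<integral>\<^sup>+ t. ennreal (G t) * indicator {..y} t \<partial>lborel"
  have c: "1 < c" and mono: "mono G" and pos: "\<And>x. 0 < G x"
    and robust: "\<And>x. ?N (x + 1) \<le> ennreal (exp s / s * G x)"
    and tight: "\<And>x. x \<le> 0 \<Longrightarrow> ?N (x + 1) = ennreal (exp s / s * G x)"
    and consistent: "?N 1 = ennreal c"
    using assms(3) unfolding tight_bidding_profile_def bidding_profile_def rho_s_def by auto
  have N_finite: "?N y < \<infinity>" for y
    using robust[of "y - 1"] by (simp add: le_less_trans)
  have N_integral: "(G has_integral enn2real (?N y)) {..y}" for y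
    using pos borel_measurable_mono[OF mono] N_finite
    by (intro nn_integral_finite_imp_has_integral) (auto simp: less_imp_le)
  then have integrable: "G integrable_on {..y}" for y
    by blast
  have N_eq: "?N y = ennreal (integral {..y} G)" for y
    using integral_unique[OF N_integral] N_finite[of y] by simp
  interpret profile G
    using mono pos integrable by unfold_locales auto
  have rho_G_nonneg: "0 \<le> exp s / s * G y" for y
    using assms(1) pos[of y] by simp
  show "tight_profile G s"
  proof unfold_locales
    show "F (x + 1) \<le> exp s / s * G x" for x
      using robust[of x] N_eq[of "x + 1"] rho_G_nonneg[of x] by (simp add: F_def)
    show "F (x + 1) = exp s / s * G x" if "x \<le> 0" for x
      using tight[OF that] N_eq[of "x + 1"] rho_G_nonneg[of x] F_nonneg[of "x + 1"] by (simp add: F_def)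
  qed (use assms(1,2) in auto)
  show "F 1 = c"
    using consistent N_eq[of 1] F_nonneg[of 1] c by (simp add: F_def)
qed

theorem theorem3:
  fixes s c :: real and G :: "real \<Rightarrow> real"
  assumes "0 < s" and "s \<le> 1"
    and "tight_bidding_profile (rho_s s) c G"
  shows "c \<ge> chi_s s"
proof -
  interpret tight_profile G s
    by (rule tight_profile_if_tight_bidding_profile[OF assms])
  have F1: "F 1 = c"
    by (rule tight_profile_if_tight_bidding_profile(2)[OF assms])
  have offset: "\<And>u. 0 < u \<Longrightarrow> 1 \<le> G u" and "c \<le> exp s / s"
    using assms(3) unfolding tight_bidding_profile_def bidding_profile_def rho_s_def by auto
  have small_s: "exp s - 1 \<le> s * c"
    using exp_minus_one_le_s_F1[OF offset] F1 by simp
  show ?thesis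
  proof (cases "s \<le> ln 2")
    case True
    then show ?thesis
      using small_s assms(1) by (simp add: chi_s_def pos_divide_le_eq mult.commute)
  next
    case False
    then have "2 \<le> exp s"
      by (metis exp_ln exp_le_cancel_iff nle_le zero_less_numeral)
    then have "s * c \<in> {1..exp 1}"
      using small_s \<open>c \<le> exp s / s\<close> assms(1,2) by (auto simp: field_simps intro: order_trans)
    moreover have "exp s \<le> s * c * (2 - ln (s * c))"
      using exp_le_xi_equation_s_F1[OF offset] \<open>s * c \<in> {1..exp 1}\<close> \<open>c \<le> exp s / s\<close> assms(1) F1
      by (simp add: field_simps)
    ultimately have "xi_s s \<le> s * c"
      using strict_mono_on_less_eq[OF strict_mono_on_mult_two_minus_ln, of "xi_s s" "s * c"]
        xi_s_solves[of s] False assms(2) by auto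
    then show ?thesis
      using False assms(1) by (simp add: chi_s_def pos_divide_le_eq mult.commute)
  qed
qed

end
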